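(* Let $h \in \mathbb{R}[t]$ satisfy $h(t) \geq 1$ for $t \geq 0$ and $h(t)\ge 0$ for all $t \in \mathbb{R}$, and let $H(x_1, \ldots, x_d) = \prod_{j=1}^d h(x_j)$. For $\mathcal{I} \subseteq \{1,\dots,d\}$ let $H_{\mathcal{I}}(x) = H(\sigma_{\mathcal{I}}x)$, where $\sigma_{\mathcal{I}}$ changes the sign of the coordinates $x_k$, $k\in\mathcal{I}$. Assume $\mu$ is an admissible measure on $\mathbb{R}^d$ which is indeterminate. Then there exist $a \in \mathbb{R}^d$ and a constant $\gamma_a >0$ such that $$\sum_{\mathcal{I} \subseteq \{1, \ldots, d \}} \int H_\mathcal{I}(x-a)\, d\mu(x) \;\geq\; \mu(\mathbb{R}^d) + \gamma_a .$$
   Context: An admissible measure on $\mathbb{R}^d$ is a positive Radon measure $\mu$ such that $\int |p|\,d\mu<\infty$ for every polynomial $p$. $\mu$ is indeterminate if there is an admissible measure on $\mathbb{R}^d$, distinct from $\mu$, giving the same integral to every polynomial. The sum is over all subsets, including the empty set. *)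

theory Defs
  imports "HOL-Analysis.Analysis" "HOL-Computational_Algebra.Polynomial"
begin

inductive_set poly_fun :: "(real ^ 'n \<Rightarrow> real) set" where
  const: "(\<lambda>x. c) \<in> poly_fun"
| coord: "(\<lambda>x. x $ k) \<in> poly_fun"
| add: "p \<in> poly_fun \<Longrightarrow> q \<in> poly_fun \<Longrightarrow> (\<lambda>x. p x + q x) \<in> poly_fun"
| mult: "p \<in> poly_fun \<Longrightarrow> q \<in> poly_fun \<Longrightarrow> (\<lambda>x. p x * q x) \<in> poly_fun"

text \<open>Positive Radon measure on R^d: a Borel measure, finite on compact sets
(on R^d such measures are automatically regular).\<close>
definition radon_measure :: "(real ^ 'n) measure \<Rightarrow> bool" where
  "radon_measure M \<longleftrightarrow> sets M = sets borel \<and>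
     (\<forall>K. compact K \<longrightarrow> emeasure M K < \<infinity>)"

definition admissible :: "(real ^ 'n) measure \<Rightarrow> bool" where
  "admissible M \<longleftrightarrow> radon_measure M \<and> (\<forall>p\<in>poly_fun. integrable M p)"

definition indeterminate :: "(real ^ 'n) measure \<Rightarrow> bool" where
  "indeterminate M \<longleftrightarrow> (\<exists>N. admissible N \<and> N \<noteq> M \<and>
     (\<forall>p\<in>poly_fun. (\<integral>x. p x \<partial>N) = (\<integral>x. p x \<partial>M)))"

definition sigma_sign :: "'n set \<Rightarrow> real ^ 'n \<Rightarrow> real ^ 'n" where
  "sigma_sign I x = (\<chi> k. if k \<in> I then - (x $ k) else x $ k)"

definition prodH :: "real poly \<Rightarrow> real ^ 'n \<Rightarrow> real" where
  "prodH h x = (\<Prod>j\<in>UNIV. poly h (x $ j))"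

end

theory Submission imports Defs begin

text \<open>Summing over the sign changes factorises: \<open>\<Sum>\<^sub>I H\<^sub>I(y) = \<Prod>\<^sub>j g(y\<^sub>j)\<close> with
\<open>g(t) = h(-t) + h(t) \<ge> 1\<close>. Since \<open>g(0) \<ge> 2\<close>, the polynomial \<open>g\<close> takes the value 1 only on a
finite set \<open>Z\<close>, so the integrand is \<open>\<ge> 1\<close> everywhere and \<open>> 1\<close> wherever one coordinate of
\<open>x - a\<close> avoids \<open>Z\<close>. An indeterminate measure is nonzero, and a nonzero measure cannot be
concentrated on both \<open>{x\<^sub>k \<in> Z}\<close> and \<open>{x\<^sub>k \<in> Z + t}\<close> for a shift \<open>t \<notin> Z - Z\<close>; translating
by such a shift therefore makes the integral exceed the total mass.\<close>

lemma poly_fun_prod: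
  assumes "finite A" "\<And>j. j \<in> A \<Longrightarrow> f j \<in> poly_fun"
  shows "(\<lambda>x. \<Prod>j\<in>A. f j x) \<in> poly_fun"
  using assms
proof (induction A rule: finite_induct)
  case empty
  then show ?case using poly_fun.const[of 1] by simp
next
  case (insert j A)
  then have "(\<lambda>x. f j x * (\<Prod>j\<in>A. f j x)) \<in> poly_fun"
    by (intro poly_fun.mult) auto
  with insert show ?case by simp
qed

lemma poly_fun_poly:
  assumes "p \<in> poly_fun"
  shows "(\<lambda>x. poly q (p x)) \<in> poly_fun"
proof (induction q)
  case 0
  then show ?case using poly_fun.const[of 0] by simp
next
  case (pCons c q)
  then have "(\<lambda>x. c + p x * poly q (p x)) \<in> poly_fun"
    using assms by (intro poly_fun.add poly_fun.mult poly_fun.const)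
  then show ?case by simp
qed

lemma poly_fun_sigma_sign_diff_nth: "(\<lambda>x. sigma_sign I (x - a) $ j) \<in> poly_fun"
proof -
  have "(\<lambda>x. (if j \<in> I then -1 else 1) * x $ j + (if j \<in> I then a $ j else - a $ j)) \<in> poly_fun"
    by (intro poly_fun.add poly_fun.mult poly_fun.const poly_fun.coord)
  then show ?thesis
    by (rule back_subst) (auto simp: sigma_sign_def)
qed

lemma poly_fun_prodH_sigma_sign: "(\<lambda>x. prodH h (sigma_sign I (x - a))) \<in> poly_fun"
  unfolding prodH_def
  by (intro poly_fun_prod poly_fun_poly poly_fun_sigma_sign_diff_nth) auto

lemma sum_prodH_sigma_sign:
  "(\<Sum>I\<in>Pow (UNIV :: 'n::finite set). prodH h (sigma_sign I y))
     = (\<Prod>j\<in>UNIV. poly h (- y $ j) + poly h (y $ j))"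
proof -
  have "prodH h (sigma_sign I y)
      = (\<Prod>j\<in>I. poly h (- y $ j)) * (\<Prod>j\<in>UNIV - I. poly h (y $ j))" for I :: "'n set"
  proof -
    have "prodH h (sigma_sign I y) = (\<Prod>j\<in>UNIV. if j \<in> I then poly h (- y $ j) else poly h (y $ j))"
      unfolding prodH_def sigma_sign_def by (intro prod.cong) auto
    then show ?thesis
      by (subst (asm) prod.If_cases) (auto simp: Diff_eq)
  qed
  then show ?thesis
    by (simp add: prod_add)
qed

lemma prod_ge_factor:
  fixes f :: "'a \<Rightarrow> 'b::linordered_idom"
  assumes "finite A" "k \<in> A" "\<And>j. j \<in> A \<Longrightarrow> f j \<ge> 1"
  shows "prod f A \<ge> f k"
proof -
  have "prod f A = f k * prod f (A - {k})"
    using assms(1,2) by (rule prod.remove)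
  moreover have "prod f (A - {k}) \<ge> 1" "f k \<ge> 0"
    using assms(2,3) by (auto intro: prod_ge_1 order.trans[OF zero_le_one])
  ultimately show ?thesis
    by (simp add: mult_le_cancel_left1)
qed

lemma sum_prodH_sigma_sign_ge:
  assumes "\<And>t. poly h (- t) + poly h t \<ge> 1"
  shows "(\<Sum>I\<in>Pow (UNIV :: 'n::finite set). prodH h (sigma_sign I y))
     \<ge> poly h (- y $ k) + poly h (y $ k)"
  unfolding sum_prodH_sigma_sign by (rule prod_ge_factor) (use assms in auto)

lemma poly_reflect_add_ge_1:
  fixes h :: "real poly"
  assumes "\<And>t. t \<ge> 0 \<Longrightarrow> poly h t \<ge> 1" "\<And>t. poly h t \<ge> 0"
  shows "poly h (- t) + poly h t \<ge> 1"
  using assms[of t] assms[of "- t"] by (cases "t \<ge> 0") auto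

lemma finite_poly_reflect_add_eq_1:
  fixes h :: "real poly"
  assumes "poly h 0 \<ge> 1"
  shows "finite {t. poly h (- t) + poly h t = 1}"
proof -
  define q where "q = pcompose h [:0, -1:] + h - 1"
  have poly_q: "poly q t = poly h (- t) + poly h t - 1" for t
    by (simp add: q_def poly_pcompose)
  have "q \<noteq> 0"
    using poly_q[of 0] assms by auto
  then have "finite {t. poly q t = 0}"
    by (rule poly_roots_finite)
  then show ?thesis
    by (simp add: poly_q)
qed

text \<open>A shift \<open>t \<notin> Z - Z\<close> makes the events for \<open>c = 0\<close> and \<open>c = t\<close> disjoint.\<close>
lemma ex_not_AE_diff_in_finite:
  fixes f :: "'a \<Rightarrow> real"
  assumes "finite Z" "emeasure M (space M) \<noteq> 0"
  shows "\<exists>c. \<not> (AE x in M. f x - c \<in> Z)"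
proof (rule ccontr)
  assume "\<not> ?thesis"
  then have AE_Z: "AE x in M. f x - c \<in> Z" for c
    by blast
  have "finite ((\<lambda>(u, v). u - v) ` (Z \<times> Z))"
    using assms(1) by simp
  then obtain t :: real where t: "t \<notin> (\<lambda>(u, v). u - v) ` (Z \<times> Z)"
    using ex_new_if_finite[OF infinite_UNIV_char_0] by blast
  have "AE x in M. False"
    using AE_Z[of 0] AE_Z[of t]
  proof eventually_elim
    case (elim x)
    then have "(f x - 0) - (f x - t) \<in> (\<lambda>(u, v). u - v) ` (Z \<times> Z)"
      by force
    with t show False
      by simp
  qed
  then have "ae_filter M = bot"
    by (simp add: trivial_limit_def)
  with assms(2) show False
    by (simp add: ae_filter_eq_bot_iff)
qed

lemma measure_space_less_integral:
  fixes f :: "'a \<Rightarrow> real"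
  assumes "finite_measure M" "integrable M f" "\<And>x. f x \<ge> 1" "\<not> (AE x in M. f x \<le> 1)"
  shows "measure M (space M) < (\<integral>x. f x \<partial>M)"
proof -
  interpret finite_measure M by fact
  have int: "integrable M (\<lambda>x. f x - 1)"
    using assms(2) by simp
  have "\<not> (AE x in M. f x - 1 = 0)"
  proof
    assume "AE x in M. f x - 1 = 0"
    then have "AE x in M. f x \<le> 1"
      by eventually_elim simp
    with assms(4) show False ..
  qed
  then have "(\<integral>x. f x - 1 \<partial>M) \<noteq> 0"
    using assms(3) by (simp add: integral_nonneg_eq_0_iff_AE[OF int])
  moreover have "(\<integral>x. f x - 1 \<partial>M) \<ge> 0"
    using assms(3) by (intro integral_nonneg_AE) (auto simp: algebra_simps)
  ultimately show ?thesis
    using assms(2) by (simp add: Bochner_Integration.integral_diff)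
qed

lemma admissible_imp_finite_measure:
  assumes "admissible M"
  shows "finite_measure M"
proof (rule finite_measureI)
  have "integrable M (\<lambda>x. 1::real)"
    using assms poly_fun.const[of 1] unfolding admissible_def by auto
  then show "emeasure M (space M) \<noteq> \<infinity>"
    by (simp add: integrable_iff_bounded)
qed

lemma indeterminate_imp_emeasure_space_nonzero:
  assumes "admissible \<mu>" "indeterminate \<mu>"
  shows "emeasure \<mu> (space \<mu>) \<noteq> 0"
proof
  assume \<mu>0: "emeasure \<mu> (space \<mu>) = 0"
  obtain N where N: "admissible N" "N \<noteq> \<mu>"
    "\<And>p. p \<in> poly_fun \<Longrightarrow> (\<integral>x. p x \<partial>N) = (\<integral>x. p x \<partial>\<mu>)"
    using assms(2) unfolding indeterminate_def by blast
  interpret N: finite_measure N using admissible_imp_finite_measure[OF N(1)] .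
  interpret \<mu>: finite_measure \<mu> using admissible_imp_finite_measure[OF assms(1)] .
  have sets_eq: "sets N = sets \<mu>"
    using N(1) assms(1) unfolding admissible_def radon_measure_def by simp
  have "measure N (space N) = measure \<mu> (space \<mu>)"
    using N(3)[OF poly_fun.const[of 1]] by simp
  then have N0: "emeasure N (space N) = 0"
    using \<mu>0 by (simp add: N.emeasure_eq_measure \<mu>.emeasure_eq_measure)
  have "N = \<mu>"
  proof (rule measure_eqI[OF sets_eq])
    fix A assume "A \<in> sets N"
    then show "emeasure N A = emeasure \<mu> A"
      using emeasure_space[of N A] emeasure_space[of \<mu> A] N0 \<mu>0 sets_eq
      by (auto simp: sets_eq_imp_space_eq[OF sets_eq])
  qed
  with N(2) show False
    by simp
qed

lemma measure_less_sum_integral_prodH_sigma_sign: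
  fixes h :: "real poly" and \<mu> :: "(real ^ 'n) measure"
  assumes g_ge_1: "\<And>t. poly h (- t) + poly h t \<ge> 1"
    and "finite_measure \<mu>"
    and int: "\<And>I. integrable \<mu> (\<lambda>x. prodH h (sigma_sign I (x - a)))"
    and not_AE_eq_1: "\<not> (AE x in \<mu>. poly h (- (x - a) $ k) + poly h ((x - a) $ k) = 1)"
  shows "measure \<mu> (space \<mu>) < (\<Sum>I\<in>Pow UNIV. \<integral>x. prodH h (sigma_sign I (x - a)) \<partial>\<mu>)"
proof -
  define F where "F x = (\<Sum>I\<in>Pow (UNIV :: 'n set). prodH h (sigma_sign I (x - a)))" for x
  have F_ge: "F x \<ge> poly h (- (x - a) $ k) + poly h ((x - a) $ k)" for x
    unfolding F_def by (rule sum_prodH_sigma_sign_ge[OF g_ge_1])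
  have "\<not> (AE x in \<mu>. F x \<le> 1)"
  proof
    assume "AE x in \<mu>. F x \<le> 1"
    then have "AE x in \<mu>. poly h (- (x - a) $ k) + poly h ((x - a) $ k) = 1"
    proof eventually_elim
      case (elim x)
      then show ?case
        using F_ge[of x] g_ge_1[of "(x - a) $ k"] by simp
    qed
    with not_AE_eq_1 show False ..
  qed
  moreover have "F x \<ge> 1" for x
    using F_ge[of x] g_ge_1[of "(x - a) $ k"] by linarith
  moreover have "integrable \<mu> F"
    unfolding F_def using int by simp
  ultimately have "measure \<mu> (space \<mu>) < (\<integral>x. F x \<partial>\<mu>)"
    using assms(2) by (intro measure_space_less_integral)
  also have "(\<integral>x. F x \<partial>\<mu>) = (\<Sum>I\<in>Pow UNIV. \<integral>x. prodH h (sigma_sign I (x - a)) \<partial>\<mu>)"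
    unfolding F_def using int by (rule Bochner_Integration.integral_sum)
  finally show ?thesis .
qed

theorem mainTheorem7:
  fixes h :: "real poly" and \<mu> :: "(real ^ 'n) measure"
  assumes "\<And>t. t \<ge> 0 \<Longrightarrow> poly h t \<ge> 1"
    and "\<And>t. poly h t \<ge> 0"
    and "admissible \<mu>"
    and "indeterminate \<mu>"
  shows "\<exists>(a :: real ^ 'n) (\<gamma> :: real). \<gamma> > 0 \<and>
    (\<Sum>I\<in>Pow (UNIV :: 'n set). \<integral>x. prodH h (sigma_sign I (x - a)) \<partial>\<mu>)
      \<ge> measure \<mu> (space \<mu>) + \<gamma>"
proof -
  have g_ge_1: "poly h (- t) + poly h t \<ge> 1" for t
    using assms(1,2) by (rule poly_reflect_add_ge_1)
  have finite_Z: "finite {t. poly h (- t) + poly h t = 1}"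
    using assms(1)[of 0] by (intro finite_poly_reflect_add_eq_1) simp
  \<comment> \<open>any coordinate will do\<close>
  define k :: 'n where "k = undefined"
  obtain c where c: "\<not> (AE x in \<mu>. x $ k - c \<in> {t. poly h (- t) + poly h t = 1})"
    using ex_not_AE_diff_in_finite[OF finite_Z indeterminate_imp_emeasure_space_nonzero[OF assms(3,4)],
      of "\<lambda>x. x $ k"]
    by blast
  have int: "integrable \<mu> (\<lambda>x. prodH h (sigma_sign I (x - axis k c)))" for I
    using assms(3) poly_fun_prodH_sigma_sign unfolding admissible_def by auto
  have "measure \<mu> (space \<mu>) < (\<Sum>I\<in>Pow UNIV. \<integral>x. prodH h (sigma_sign I (x - axis k c)) \<partial>\<mu>)"
    using c by (intro measure_less_sum_integral_prodH_sigma_sign[OF g_ge_1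
      admissible_imp_finite_measure[OF assms(3)] int, where k = k]) simp
  then show ?thesis
    by (intro exI[of _ "axis k c"]) (auto intro: exI[of _ "_ - measure \<mu> (space \<mu>)"])
qed

end
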